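(* Let $G=(V,E,H)$ be a HEDG and $\mathbb{P}_V$ a probability distribution on $\mathcal{X}_V=\prod_{v\in V}\mathcal{X}_v$ (standard Borel spaces) that satisfies the intersection property (e.g. because it has a strictly positive density w.r.t. a product measure). If $(G,\mathbb{P}_V)$ satisfies the ancestral undirected pairwise Markov property, then it satisfies the ancestral undirected global Markov property.
   Context: HEDG $G=(V,E,H)$: $V$ finite, $E\subseteq V\times V$ (self-loops allowed), $H$ a simplicial complex on $V$ (contains singletons, closed under subsets); $v\leftrightarrow w$ for distinct $v,w$ with $\{v,w\}\in H$. $A\subseteq V$ is ancestral if it contains every node with a directed path into $A$; induced sub-HEDG $(A,E\cap A^2,\{F\in H:F\subseteq A\})$. Moralization: undirected graph with $v - w$ ($v\neq w$) iff there are $v_1,\dots,v_n$ ($n\ge1$) with $v\in\{v_1\}\cup\mathrm{Pa}(v_1)$, $w\in\{v_n\}\cup\mathrm{Pa}(v_n)$, $v_1\leftrightarrow\cdots\leftrightarrow v_n$; $\partial_U(v)$ denotes neighbours of $v$ in undirected graph $U$. $X\perp_{\mathbb{P}_V}Y\mid Z$ denotes conditional independence of coordinate projections. Intersection property: for pairwise disjoint $X,Y,Z,W\subseteq V$, $X\perp Y\mid W\cup Z$ and $X\perp W\mid Y\cup Z$ imply $X\perp Y\cup W\mid Z$. Ancestral undirected pairwise Markov property: for every ancestral $A$ and $v,w\in A$ with $w\notin\partial_{A^{\mathrm{moral}}}(v)\cup\{v\}$: $\{v\}\perp_{\mathbb{P}_V}\{w\}\mid A\setminus\{v,w\}$. Ancestral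 undirected global Markov property: for every ancestral $A$ and $X,Y,Z\subseteq A$, if every path in $A^{\mathrm{moral}}$ from $X$ to $Y$ contains a node of $Z$, then $X\perp_{\mathbb{P}_V}Y\mid Z$. *)

theory Defs
  imports "HOL-Probability.Probability"
begin

text \<open>A HEDG (V,E,H): V finite, E a set of directed edges on V (self-loops allowed),
  H a simplicial complex on V (contains all singletons, closed under subsets).\<close>
definition hedg :: "'v set \<Rightarrow> ('v \<times> 'v) set \<Rightarrow> 'v set set \<Rightarrow> bool" where
  "hedg V E H \<longleftrightarrow> finite V \<and> E \<subseteq> V \<times> V \<and> (\<forall>F\<in>H. F \<subseteq> V)
     \<and> (\<forall>v\<in>V. {v} \<in> H) \<and> (\<forall>F\<in>H. \<forall>F'. F' \<subseteq> F \<longrightarrow> F' \<in> H)"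

definition parents :: "('v \<times> 'v) set \<Rightarrow> 'v \<Rightarrow> 'v set" where
  "parents E v = {w. (w, v) \<in> E}"

definition bidir :: "'v set set \<Rightarrow> 'v \<Rightarrow> 'v \<Rightarrow> bool" where
  "bidir H v w \<longleftrightarrow> v \<noteq> w \<and> {v, w} \<in> H"

definition ancestral :: "'v set \<Rightarrow> ('v \<times> 'v) set \<Rightarrow> 'v set \<Rightarrow> bool" where
  "ancestral V E A \<longleftrightarrow> A \<subseteq> V \<and> (\<forall>v\<in>A. \<forall>w. (w, v) \<in> E\<^sup>* \<longrightarrow> w \<in> A)"

definition moral_adj :: "'v set \<Rightarrow> ('v \<times> 'v) set \<Rightarrow> 'v set set \<Rightarrow> 'v \<Rightarrow> 'v \<Rightarrow> bool" where
  "moral_adj V E H v w \<longleftrightarrow> v \<noteq> w \<and>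
     (\<exists>vs. vs \<noteq> [] \<and> set vs \<subseteq> V
        \<and> v \<in> {hd vs} \<union> parents E (hd vs)
        \<and> w \<in> {last vs} \<union> parents E (last vs)
        \<and> (\<forall>i. Suc i < length vs \<longrightarrow> bidir H (vs ! i) (vs ! Suc i)))"

definition moral_adj_induced :: "'v set \<Rightarrow> ('v \<times> 'v) set \<Rightarrow> 'v set set \<Rightarrow> 'v set \<Rightarrow> 'v \<Rightarrow> 'v \<Rightarrow> bool" where
  "moral_adj_induced V E H A = moral_adj A (E \<inter> (A \<times> A)) {F \<in> H. F \<subseteq> A}"

definition separates :: "'v set \<Rightarrow> ('v \<Rightarrow> 'v \<Rightarrow> bool) \<Rightarrow> 'v set \<Rightarrow> 'v set \<Rightarrow> 'v set \<Rightarrow> bool" where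
  "separates A U X Y Z \<longleftrightarrow>
     (\<forall>p. p \<noteq> [] \<and> set p \<subseteq> A \<and> hd p \<in> X \<and> last p \<in> Y
          \<and> (\<forall>i. Suc i < length p \<longrightarrow> U (p ! i) (p ! Suc i))
        \<longrightarrow> set p \<inter> Z \<noteq> {})"

definition standard_borel :: "'b measure \<Rightarrow> bool" where
  "standard_borel N \<longleftrightarrow> (\<exists>T. completely_metrizable_space T \<and> separable_space T
     \<and> space N = topspace T \<and> sets N = sigma_sets (topspace T) {U. openin T U})"

definition coord_sigma :: "('v \<Rightarrow> 'b) measure \<Rightarrow> ('v \<Rightarrow> 'b measure) \<Rightarrow> 'v set \<Rightarrow> ('v \<Rightarrow> 'b) measure" where
  "coord_sigma P M S = vimage_algebra (space P) (\<lambda>\<omega>. restrict \<omega> S) (PiM S M)"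

definition cond_indep :: "('v \<Rightarrow> 'b) measure \<Rightarrow> ('v \<Rightarrow> 'b measure) \<Rightarrow> 'v set \<Rightarrow> 'v set \<Rightarrow> 'v set \<Rightarrow> bool" where
  "cond_indep P M X Y Z \<longleftrightarrow>
     (\<forall>a \<in> sets (coord_sigma P M X). \<forall>b \<in> sets (coord_sigma P M Y).
        AE \<omega> in P. real_cond_exp P (coord_sigma P M Z) (indicator (a \<inter> b)) \<omega>
          = real_cond_exp P (coord_sigma P M Z) (indicator a) \<omega>
            * real_cond_exp P (coord_sigma P M Z) (indicator b) \<omega>)"

definition intersection_property :: "'v set \<Rightarrow> ('v \<Rightarrow> 'b) measure \<Rightarrow> ('v \<Rightarrow> 'b measure) \<Rightarrow> bool" where
  "intersection_property V P M \<longleftrightarrow>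
     (\<forall>X Y Z W. X \<subseteq> V \<and> Y \<subseteq> V \<and> Z \<subseteq> V \<and> W \<subseteq> V
        \<and> X \<inter> Y = {} \<and> X \<inter> Z = {} \<and> X \<inter> W = {} \<and> Y \<inter> Z = {} \<and> Y \<inter> W = {} \<and> Z \<inter> W = {}
        \<and> cond_indep P M X Y (W \<union> Z) \<and> cond_indep P M X W (Y \<union> Z)
        \<longrightarrow> cond_indep P M X (Y \<union> W) Z)"

definition ancestral_pairwise_markov ::
  "'v set \<Rightarrow> ('v \<times> 'v) set \<Rightarrow> 'v set set \<Rightarrow> ('v \<Rightarrow> 'b) measure \<Rightarrow> ('v \<Rightarrow> 'b measure) \<Rightarrow> bool" where
  "ancestral_pairwise_markov V E H P M \<longleftrightarrow>
     (\<forall>A. ancestral V E A \<longrightarrow>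
        (\<forall>v\<in>A. \<forall>w\<in>A. w \<noteq> v \<and> \<not> moral_adj_induced V E H A v w
           \<longrightarrow> cond_indep P M {v} {w} (A - {v, w})))"

definition ancestral_global_markov ::
  "'v set \<Rightarrow> ('v \<times> 'v) set \<Rightarrow> 'v set set \<Rightarrow> ('v \<Rightarrow> 'b) measure \<Rightarrow> ('v \<Rightarrow> 'b measure) \<Rightarrow> bool" where
  "ancestral_global_markov V E H P M \<longleftrightarrow>
     (\<forall>A. ancestral V E A \<longrightarrow>
        (\<forall>X Y Z. X \<subseteq> A \<and> Y \<subseteq> A \<and> Z \<subseteq> A
           \<and> separates A (moral_adj_induced V E H A) X Y Z
           \<longrightarrow> cond_indep P M X Y Z))"

end

theory Submission
  imports Defs
begin

(* Lauritzen's argument for "pairwise implies global" under the intersection property, run inside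
   each ancestral set A on the moral graph of the induced sub-HEDG.  One shows that X and Y are
   conditionally independent given any S disjoint from them that separates them, by induction on
   the size of A - S: if some vertex alpha lies outside X, Y and S, then it is separated by S
   together with one of X, Y from the other, and two instances with larger separators are combined
   by the intersection property; if X, Y and S exhaust A, either one of X, Y is split into two parts
   (again two larger separators and the intersection property), or X = {x}, Y = {y} are non-adjacent
   and the pairwise property applies directly.  Overlaps of X and Y with the separator are absorbed
   at the end, since the conditioning variables may be added to either side.

   For fixed b and c in the conditioning
   sigma-algebra, both sides of the integrated factorisation identity are finite measures in a, so
   it propagates from an intersection-stable generator to the generated sigma-algebra. *)

lemma emeasure_eq_on_sigma_sets:
  assumes N: "finite_measure N" and N': "finite_measure N'" and sets_eq: "sets N' = sets N"
    and G: "Int_stable G" "G \<subseteq> sets N"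
    and eq: "\<And>g. g \<in> G \<Longrightarrow> emeasure N g = emeasure N' g"
    and eq_space: "emeasure N (space N) = emeasure N' (space N)"
    and a: "a \<in> sigma_sets (space N) G"
  shows "emeasure N a = emeasure N' a"
proof -
  have space_eq: "space N' = space N" by (rule sets_eq_imp_space_eq[OF sets_eq])
  have sigma_sub: "sigma_sets (space N) G \<subseteq> sets N"
    using G(2) by (intro sets.sigma_sets_subset') auto
  have "G \<subseteq> Pow (space N)" using G(2) sets.sets_into_space by auto
  from G(1) this a show ?thesis
  proof (induction rule: sigma_sets_induct_disjoint)
    case (basic g)
    then show ?case by (rule eq)
  next
    case empty
    then show ?case by simp
  next
    case (compl a)
    have "a \<in> sets N" "a \<in> sets N'" using compl.hyps sigma_sub sets_eq by auto
    have "emeasure N (space N - a) = emeasure N (space N) - emeasure N a"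
      using \<open>a \<in> sets N\<close> N by (intro emeasure_compl) (auto simp: finite_measure.emeasure_finite)
    also have "\<dots> = emeasure N' (space N') - emeasure N' a"
      using compl.IH eq_space space_eq by simp
    also have "\<dots> = emeasure N' (space N' - a)"
      using \<open>a \<in> sets N'\<close> N' by (intro emeasure_compl[symmetric]) (auto simp: finite_measure.emeasure_finite)
    finally show ?case by (simp add: space_eq)
  next
    case (union A)
    have "range A \<subseteq> sets N" "range A \<subseteq> sets N'" using union.hyps(2) sigma_sub sets_eq by auto
    then show ?case
      using union.hyps(1) union.IH by (simp add: suminf_emeasure[symmetric])
  qed
qed

lemma Int_stable_Int_sets: "Int_stable {a \<inter> c | a c. a \<in> sets N \<and> c \<in> sets N'}"
  unfolding Int_stable_def
proof safe
  fix a c a' c' assume "a \<in> sets N" "c \<in> sets N'" "a' \<in> sets N" "c' \<in> sets N'"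
  then show "\<exists>a'' c''. a \<inter> c \<inter> (a' \<inter> c') = a'' \<inter> c'' \<and> a'' \<in> sets N \<and> c'' \<in> sets N'"
    by (intro exI[of _ "a \<inter> a'"] exI[of _ "c \<inter> c'"]) auto
qed

section \<open>Conditional independence of events\<close>

definition cond_indep_events :: "'a measure \<Rightarrow> 'a measure \<Rightarrow> 'a set \<Rightarrow> 'a set \<Rightarrow> bool" where
  "cond_indep_events P F a b \<longleftrightarrow> (AE \<omega> in P. real_cond_exp P F (indicator (a \<inter> b)) \<omega>
     = real_cond_exp P F (indicator a) \<omega> * real_cond_exp P F (indicator b) \<omega>)"

lemma cond_indep_iff_events:
  "cond_indep P M X Y Z \<longleftrightarrow> (\<forall>a\<in>sets (coord_sigma P M X). \<forall>b\<in>sets (coord_sigma P M Y).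
     cond_indep_events P (coord_sigma P M Z) a b)"
  unfolding cond_indep_def cond_indep_events_def ..

lemma cond_indep_events_commute: "cond_indep_events P F a b \<Longrightarrow> cond_indep_events P F b a"
  unfolding cond_indep_events_def by (simp add: Int_commute mult.commute)

lemma cond_indep_sym: "cond_indep P M X Y Z \<Longrightarrow> cond_indep P M Y X Z"
  unfolding cond_indep_iff_events by (blast intro: cond_indep_events_commute)

context finite_measure
begin

lemma integrable_indicator_real: "a \<in> sets M \<Longrightarrow> integrable M (indicator a :: _ \<Rightarrow> real)"
  by (simp add: less_top[symmetric])

lemma measure_Int_eq_set_integral:
  assumes "a \<in> sets M" "c \<in> sets M"
  shows "measure M (a \<inter> c) = (\<integral>x\<in>c. indicator a x \<partial>M)"
proof -
  have "indicator (a \<inter> c) = (\<lambda>x. indicator c x *\<^sub>R indicator a x :: real)"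
    by (auto simp: indicator_def)
  moreover have "measure M (a \<inter> c) = (\<integral>x. indicator (a \<inter> c) x \<partial>M)"
    using assms by (simp add: less_top[symmetric])
  ultimately show ?thesis
    by (simp add: set_lebesgue_integral_def)
qed

lemma emeasure_density_unit_bounded:
  assumes h: "h \<in> borel_measurable M" "AE x in M. 0 \<le> h x \<and> h x \<le> 1" and a: "a \<in> sets M"
  shows "emeasure (density M h) a = ennreal (\<integral>x. indicator a x * h x \<partial>M)"
    and "0 \<le> (\<integral>x. indicator a x * h x \<partial>M)"
proof -
  have "AE x in M. norm (indicator a x * h x) \<le> 1" and nonneg: "AE x in M. 0 \<le> indicator a x * h x"
    using h(2) by (eventually_elim, simp add: indicator_def)+
  moreover have "(\<lambda>x. indicator a x * h x) \<in> borel_measurable M"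
    using h(1) a by measurable
  ultimately have "integrable M (\<lambda>x. indicator a x * h x)"
    by (intro integrable_const_bound[where B=1]) auto
  then have "(\<integral>\<^sup>+x. ennreal (indicator a x * h x) \<partial>M) = ennreal (\<integral>x. indicator a x * h x \<partial>M)"
    using nonneg by (rule nn_integral_eq_integral)
  moreover have "emeasure (density M h) a = (\<integral>\<^sup>+x. ennreal (indicator a x * h x) \<partial>M)"
    using h(1) a by (auto simp: emeasure_density intro!: nn_integral_cong split: split_indicator)
  ultimately show "emeasure (density M h) a = ennreal (\<integral>x. indicator a x * h x \<partial>M)"
    by simp
  show "0 \<le> (\<integral>x. indicator a x * h x \<partial>M)"
    using nonneg by (rule integral_nonneg_AE)
qed

end

context finite_measure_subalgebra
begin

lemma sets_F_subset: "sets F \<subseteq> sets M"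
  using subalg unfolding subalgebra_def by auto

lemma real_cond_exp_indicator_bounds:
  assumes "a \<in> sets M"
  shows "AE x in M. 0 \<le> real_cond_exp M F (indicator a) x \<and> real_cond_exp M F (indicator a) x \<le> 1"
proof -
  have "AE x in M. 0 \<le> real_cond_exp M F (indicator a) x"
    using assms by (intro real_cond_exp_pos) auto
  moreover have "AE x in M. real_cond_exp M F (indicator a) x \<le> 1"
    using assms by (intro real_cond_exp_le_c) (auto intro: integrable_indicator_real)
  ultimately show ?thesis by auto
qed

lemma cond_indep_events_measurable:
  assumes a: "a \<in> sets F" and b: "b \<in> sets M"
  shows "cond_indep_events M F a b"
proof -
  have aM: "a \<in> sets M" using a sets_F_subset by auto
  have "AE x in M. real_cond_exp M F (\<lambda>x. indicator a x * indicator b x) x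
      = indicator a x * real_cond_exp M F (indicator b) x"
    using a b aM by (intro real_cond_exp_mult)
      (auto simp flip: indicator_inter_arith intro: integrable_indicator_real)
  moreover have "AE x in M. real_cond_exp M F (indicator a) x = indicator a x"
    using a aM by (intro real_cond_exp_F_meas) (auto intro: integrable_indicator_real)
  ultimately show ?thesis
    unfolding cond_indep_events_def indicator_inter_arith by auto
qed

lemma cond_indep_events_Int_measurable:
  assumes a: "a \<in> sets M" and b: "b \<in> sets M" and c: "c \<in> sets F"
    and indep: "cond_indep_events M F a b"
  shows "cond_indep_events M F (a \<inter> c) b"
proof -
  have cM: "c \<in> sets M" using c sets_F_subset by auto
  have pull_out: "AE x in M. real_cond_exp M F (\<lambda>x. indicator c x * indicator d x) x
      = indicator c x * real_cond_exp M F (indicator d) x" if "d \<in> sets M" for d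
    using c cM that by (intro real_cond_exp_mult)
      (auto simp flip: indicator_inter_arith intro: integrable_indicator_real)
  have "indicator (a \<inter> c \<inter> b) = (\<lambda>x. indicator c x * indicator (a \<inter> b) x :: real)"
    "indicator (a \<inter> c) = (\<lambda>x. indicator c x * indicator a x :: real)"
    by (auto simp: indicator_def)
  then show ?thesis
    using pull_out[of "a \<inter> b"] pull_out[of a] indep a b
    unfolding cond_indep_events_def by auto
qed

lemma cond_indep_events_iff_set_integral:
  assumes a: "a \<in> sets M" and b: "b \<in> sets M"
  shows "cond_indep_events M F a b \<longleftrightarrow> (\<forall>c\<in>sets F. measure M (a \<inter> b \<inter> c)
    = (\<integral>x\<in>c. real_cond_exp M F (indicator a) x * real_cond_exp M F (indicator b) x \<partial>M))"
    (is "_ \<longleftrightarrow> (\<forall>c\<in>sets F. _ = (\<integral>x\<in>c. ?prod x \<partial>M))")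
proof -
  have ab: "a \<inter> b \<in> sets M" using a b by auto
  have measure_eq: "measure M (a \<inter> b \<inter> c) = (\<integral>x\<in>c. indicator (a \<inter> b) x \<partial>M)"
    if "c \<in> sets F" for c
    using ab that sets_F_subset by (intro measure_Int_eq_set_integral) auto
  have cond_exp_eq: "(\<integral>x\<in>c. indicator (a \<inter> b) x \<partial>M)
      = (\<integral>x\<in>c. real_cond_exp M F (indicator (a \<inter> b)) x \<partial>M)" if "c \<in> sets F" for c
    using ab that by (intro real_cond_exp_intA) (auto intro: integrable_indicator_real)
  have "AE x in M. norm (?prod x) \<le> 1"
    using real_cond_exp_indicator_bounds[OF a] real_cond_exp_indicator_bounds[OF b]
    by eventually_elim (auto simp: abs_mult intro: mult_le_one)
  then have prod_integrable: "integrable M ?prod"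
    by (rule integrable_const_bound) measurable
  show ?thesis
  proof
    assume "cond_indep_events M F a b"
    then have "AE x in M. real_cond_exp M F (indicator (a \<inter> b)) x = ?prod x"
      unfolding cond_indep_events_def .
    then have "(\<integral>x\<in>c. real_cond_exp M F (indicator (a \<inter> b)) x \<partial>M) = (\<integral>x\<in>c. ?prod x \<partial>M)"
      if "c \<in> sets F" for c
      unfolding set_lebesgue_integral_def using that sets_F_subset
      by (intro integral_cong_AE) (auto elim!: eventually_mono)
    then show "\<forall>c\<in>sets F. measure M (a \<inter> b \<inter> c) = (\<integral>x\<in>c. ?prod x \<partial>M)"
      by (simp add: measure_eq cond_exp_eq)
  next
    assume "\<forall>c\<in>sets F. measure M (a \<inter> b \<inter> c) = (\<integral>x\<in>c. ?prod x \<partial>M)"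
    then have "AE x in M. real_cond_exp M F (indicator (a \<inter> b)) x = ?prod x"
      using ab prod_integrable
      by (intro real_cond_exp_charact) (auto simp: measure_eq intro: integrable_indicator_real)
    then show "cond_indep_events M F a b"
      unfolding cond_indep_events_def .
  qed
qed

lemma set_integral_cond_exp_indicator_mult:
  assumes a: "a \<in> sets M" and b: "b \<in> sets M" and c: "c \<in> sets F"
  shows "(\<integral>x\<in>c. real_cond_exp M F (indicator a) x * real_cond_exp M F (indicator b) x \<partial>M)
    = (\<integral>x. indicator a x * (indicator c x * real_cond_exp M F (indicator b) x) \<partial>M)"
proof -
  let ?h = "\<lambda>x. indicator c x * real_cond_exp M F (indicator b) x"
  have cM: "c \<in> sets M" using c sets_F_subset by auto
  have "AE x in M. norm (?h x * indicator a x) \<le> 1"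
    using real_cond_exp_indicator_bounds[OF b] by eventually_elim (auto simp: indicator_def)
  moreover have "(\<lambda>x. ?h x * indicator a x) \<in> borel_measurable M"
    using a cM by measurable
  ultimately have "integrable M (\<lambda>x. ?h x * indicator a x)"
    by (rule integrable_const_bound)
  moreover have "?h \<in> borel_measurable F"
    using c by measurable
  moreover have "indicator a \<in> borel_measurable M"
    using a by measurable
  ultimately have "(\<integral>x. ?h x * real_cond_exp M F (indicator a) x \<partial>M) = (\<integral>x. ?h x * indicator a x \<partial>M)"
    by (rule real_cond_exp_intg(2))
  then show ?thesis
    by (simp add: set_lebesgue_integral_def ac_simps)
qed

lemma cond_indep_events_sigma_sets:
  assumes G: "G \<subseteq> sets M" "Int_stable G" and indep: "\<And>g. g \<in> G \<Longrightarrow> cond_indep_events M F g b"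
    and b: "b \<in> sets M" and a: "a \<in> sigma_sets (space M) G"
  shows "cond_indep_events M F a b"
proof -
  have aM: "a \<in> sets M"
    using a sets.sigma_sets_subset'[OF G(1) sets.top] by auto
  show ?thesis
    unfolding cond_indep_events_iff_set_integral[OF aM b]
  proof
    fix c assume c: "c \<in> sets F"
    then have bc: "b \<inter> c \<in> sets M" using b sets_F_subset by auto
    define h where "h x = indicator c x * real_cond_exp M F (indicator b) x" for x
    have "c \<in> sets M" using c sets_F_subset by auto
    then have h_measurable: "h \<in> borel_measurable M"
      unfolding h_def by measurable
    have h_bounds: "AE x in M. 0 \<le> h x \<and> h x \<le> 1"
      using real_cond_exp_indicator_bounds[OF b] unfolding h_def
      by eventually_elim (auto simp: indicator_def)
    have factorizes_iff: "measure M (a' \<inter> b \<inter> c)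
        = (\<integral>x\<in>c. real_cond_exp M F (indicator a') x * real_cond_exp M F (indicator b) x \<partial>M)
      \<longleftrightarrow> emeasure (density M (indicator (b \<inter> c))) a' = emeasure (density M h) a'"
      if a': "a' \<in> sets M" for a'
      using a' bc c emeasure_density_unit_bounded[OF h_measurable h_bounds a']
      by (simp add: set_integral_cond_exp_indicator_mult[OF a' b c] emeasure_restricted
          emeasure_eq_measure Int_ac h_def)
    have "emeasure (density M (indicator (b \<inter> c))) a = emeasure (density M h) a"
    proof (rule emeasure_eq_on_sigma_sets)
      show "finite_measure (density M (indicator (b \<inter> c)))"
        using bc by (rule finite_measure_restricted)
      show "finite_measure (density M h)"
        by (rule finite_measureI)
          (simp add: emeasure_density_unit_bounded(1)[OF h_measurable h_bounds sets.top])
      show "G \<subseteq> sets (density M (indicator (b \<inter> c)))"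
        using G(1) by simp
      show "emeasure (density M (indicator (b \<inter> c))) g = emeasure (density M h) g" if "g \<in> G" for g
        using that G(1) c indep[OF that] factorizes_iff[of g]
        unfolding cond_indep_events_iff_set_integral[OF subsetD[OF G(1) that] b] by auto
      have "space M \<in> sets F"
        using subalg by (metis sets.top subalgebra_def)
      then have "cond_indep_events M F (space M) b"
        using b by (rule cond_indep_events_measurable)
      then show "emeasure (density M (indicator (b \<inter> c))) (space (density M (indicator (b \<inter> c))))
          = emeasure (density M h) (space (density M (indicator (b \<inter> c))))"
        using c factorizes_iff[OF sets.top]
        unfolding cond_indep_events_iff_set_integral[OF sets.top b] by auto
    qed (use G(2) a in simp_all)
    then show "measure M (a \<inter> b \<inter> c)
        = (\<integral>x\<in>c. real_cond_exp M F (indicator a) x * real_cond_exp M F (indicator b) x \<partial>M)"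
      using factorizes_iff[OF aM] by simp
  qed
qed

end

section \<open>Coordinate sigma-algebras\<close>

lemma restrict_vimage_cylinder:
  assumes restrict_in: "(\<lambda>\<omega>. restrict \<omega> S) \<in> \<Omega> \<rightarrow> (\<Pi>\<^sub>E i\<in>S. space (M i))" and i: "i \<in> S"
  shows "(\<lambda>\<omega>. restrict \<omega> S) -` {f \<in> \<Pi>\<^sub>E i\<in>S. space (M i). f i \<in> A} \<inter> \<Omega> = {\<omega> \<in> \<Omega>. \<omega> i \<in> A}"
proof (intro set_eqI iffI)
  fix \<omega> assume \<omega>: "\<omega> \<in> {\<omega> \<in> \<Omega>. \<omega> i \<in> A}"
  then have "restrict \<omega> S \<in> (\<Pi>\<^sub>E i\<in>S. space (M i))"
    using restrict_in by blast
  then show "\<omega> \<in> (\<lambda>\<omega>. restrict \<omega> S) -` {f \<in> \<Pi>\<^sub>E i\<in>S. space (M i). f i \<in> A} \<inter> \<Omega>"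
    using i \<omega> by simp
qed (use i in simp)

locale coord_prob_space = prob_space P for P :: "('v \<Rightarrow> 'b) measure" +
  fixes V :: "'v set" and M :: "'v \<Rightarrow> 'b measure"
  assumes sets_P: "sets P = sets (PiM V M)"
begin

lemma space_P: "space P = space (PiM V M)"
  by (rule sets_eq_imp_space_eq[OF sets_P])

lemma sets_coord_sigma:
  assumes S: "S \<subseteq> V"
  shows "sets (coord_sigma P M S)
    = sigma_sets (space P) {{\<omega> \<in> space P. \<omega> i \<in> A} | i A. i \<in> S \<and> A \<in> sets (M i)}"
proof -
  have restrict_in: "(\<lambda>\<omega>. restrict \<omega> S) \<in> space P \<rightarrow> (\<Pi>\<^sub>E i\<in>S. space (M i))"
    using S by (auto simp: space_P space_PiM)
  have "sets (coord_sigma P M S) = {(\<lambda>\<omega>. restrict \<omega> S) -` A \<inter> space P | A. A \<in> sets (PiM S M)}"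
    unfolding coord_sigma_def
    by (rule sets_vimage_algebra2) (use restrict_in in \<open>simp add: space_PiM\<close>)
  also have "\<dots> = sigma_sets (space P) {(\<lambda>\<omega>. restrict \<omega> S) -` A \<inter> space P | A.
      A \<in> {{f \<in> \<Pi>\<^sub>E i\<in>S. space (M i). f i \<in> A} | i A. i \<in> S \<and> A \<in> sets (M i)}}"
    unfolding sets_PiM_single by (rule sigma_sets_vimage_commute[OF restrict_in])
  also have "{(\<lambda>\<omega>. restrict \<omega> S) -` A \<inter> space P | A.
      A \<in> {{f \<in> \<Pi>\<^sub>E i\<in>S. space (M i). f i \<in> A} | i A. i \<in> S \<and> A \<in> sets (M i)}}
    = {{\<omega> \<in> space P. \<omega> i \<in> A} | i A. i \<in> S \<and> A \<in> sets (M i)}"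
    (is "?preimages = ?cylinders")
  proof (intro subset_antisym subsetI)
    fix s
    show "s \<in> ?cylinders" if s: "s \<in> ?preimages"
    proof -
      obtain i A where "s = (\<lambda>\<omega>. restrict \<omega> S) -` {f \<in> \<Pi>\<^sub>E i\<in>S. space (M i). f i \<in> A} \<inter> space P"
        "i \<in> S" "A \<in> sets (M i)"
        using s by blast
      then show ?thesis
        using restrict_vimage_cylinder[OF restrict_in \<open>i \<in> S\<close>, of A] by blast
    qed
    show "s \<in> ?preimages" if s: "s \<in> ?cylinders"
    proof -
      obtain i A where "s = {\<omega> \<in> space P. \<omega> i \<in> A}" "i \<in> S" "A \<in> sets (M i)"
        using s by blast
      then show ?thesis
        using restrict_vimage_cylinder[OF restrict_in \<open>i \<in> S\<close>, of A] by blast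
    qed
  qed
  finally show ?thesis .
qed

lemma sets_coord_sigma_subset:
  assumes "S \<subseteq> V"
  shows "sets (coord_sigma P M S) \<subseteq> sets P"
proof -
  have "{\<omega> \<in> space P. \<omega> i \<in> A} \<in> sets P" if "i \<in> S" "A \<in> sets (M i)" for i A
  proof -
    have "(\<lambda>\<omega>. \<omega> i) -` A \<inter> space (PiM V M) \<in> sets (PiM V M)"
      using that assms by (intro measurable_sets[OF measurable_component_singleton]) auto
    then show ?thesis
      by (simp add: sets_P space_P Int_def conj_commute)
  qed
  then show ?thesis
    unfolding sets_coord_sigma[OF assms] by (intro sets.sigma_sets_subset') auto
qed

lemma sets_coord_sigma_mono:
  assumes "S \<subseteq> T" "T \<subseteq> V"
  shows "sets (coord_sigma P M S) \<subseteq> sets (coord_sigma P M T)"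
  unfolding sets_coord_sigma[OF assms(2)] sets_coord_sigma[OF order_trans[OF assms]]
  by (rule sigma_sets_mono') (use assms in blast)

lemma sets_coord_sigma_Un_subset:
  assumes X: "X \<subseteq> V" and Y: "Y \<subseteq> V"
  shows "sets (coord_sigma P M (X \<union> Y)) \<subseteq> sigma_sets (space P)
    {a \<inter> b | a b. a \<in> sets (coord_sigma P M X) \<and> b \<in> sets (coord_sigma P M Y)}"
proof -
  have space_in: "space P \<in> sets (coord_sigma P M S)" for S
    using sets.top[of "coord_sigma P M S"] by (simp add: coord_sigma_def)
  have "{\<omega> \<in> space P. \<omega> i \<in> A}
      \<in> {a \<inter> b | a b. a \<in> sets (coord_sigma P M X) \<and> b \<in> sets (coord_sigma P M Y)}"
    if "i \<in> X \<union> Y" "A \<in> sets (M i)" for i A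
  proof (cases "i \<in> X")
    case True
    then have "{\<omega> \<in> space P. \<omega> i \<in> A} \<in> sets (coord_sigma P M X)"
      unfolding sets_coord_sigma[OF X] using that by blast
    then show ?thesis
      using space_in[of Y] by blast
  next
    case False
    then have "{\<omega> \<in> space P. \<omega> i \<in> A} \<in> sets (coord_sigma P M Y)"
      unfolding sets_coord_sigma[OF Y] using that by blast
    then show ?thesis
      using space_in[of X] by blast
  qed
  then show ?thesis
    unfolding sets_coord_sigma[OF Un_least[OF X Y]] by (intro sigma_sets_mono') blast
qed

lemma finite_measure_subalgebra_coord_sigma:
  assumes "Z \<subseteq> V"
  shows "finite_measure_subalgebra P (coord_sigma P M Z)"
proof
  show "subalgebra P (coord_sigma P M Z)"
    using sets_coord_sigma_subset[OF assms] by (simp add: subalgebra_def coord_sigma_def)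
qed

lemma cond_indep_mono_right:
  assumes "cond_indep P M X T Z" "Y \<subseteq> T" "T \<subseteq> V"
  shows "cond_indep P M X Y Z"
  using assms sets_coord_sigma_mono[OF assms(2,3)] unfolding cond_indep_def by blast

lemma cond_indep_of_subset_cond:
  assumes XZ: "X \<subseteq> Z" and Z: "Z \<subseteq> V" and Y: "Y \<subseteq> V"
  shows "cond_indep P M X Y Z"
proof -
  interpret finite_measure_subalgebra P "coord_sigma P M Z"
    by (rule finite_measure_subalgebra_coord_sigma[OF Z])
  show ?thesis
    unfolding cond_indep_iff_events
    using sets_coord_sigma_mono[OF XZ Z] sets_coord_sigma_subset[OF Y]
    by (blast intro: cond_indep_events_measurable)
qed

lemma cond_indep_Un_cond_left:
  assumes indep: "cond_indep P M X Y Z" and W: "W \<subseteq> Z"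
    and X: "X \<subseteq> V" and Y: "Y \<subseteq> V" and Z: "Z \<subseteq> V"
  shows "cond_indep P M (X \<union> W) Y Z"
proof -
  interpret finite_measure_subalgebra P "coord_sigma P M Z"
    by (rule finite_measure_subalgebra_coord_sigma[OF Z])
  have WV: "W \<subseteq> V" using W Z by auto
  define G where "G = {a \<inter> c | a c. a \<in> sets (coord_sigma P M X) \<and> c \<in> sets (coord_sigma P M W)}"
  have G_sets: "G \<subseteq> sets P"
    unfolding G_def using sets_coord_sigma_subset[OF X] sets_coord_sigma_subset[OF WV] by blast
  have G_Int_stable: "Int_stable G"
    unfolding G_def by (rule Int_stable_Int_sets)
  have G_indep: "cond_indep_events P (coord_sigma P M Z) g b"
    if "g \<in> G" "b \<in> sets (coord_sigma P M Y)" for g b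
  proof -
    obtain a c where g: "g = a \<inter> c" "a \<in> sets (coord_sigma P M X)" "c \<in> sets (coord_sigma P M W)"
      using \<open>g \<in> G\<close> unfolding G_def by blast
    show ?thesis
      unfolding g(1)
      using g(2,3) that(2) indep sets_coord_sigma_subset[OF X] sets_coord_sigma_subset[OF Y]
        sets_coord_sigma_mono[OF W Z]
      by (intro cond_indep_events_Int_measurable) (auto simp: cond_indep_iff_events)
  qed
  show ?thesis
    unfolding cond_indep_iff_events
  proof (intro ballI)
    fix a b assume a: "a \<in> sets (coord_sigma P M (X \<union> W))" and b: "b \<in> sets (coord_sigma P M Y)"
    show "cond_indep_events P (coord_sigma P M Z) a b"
    proof (rule cond_indep_events_sigma_sets[OF G_sets G_Int_stable])
      show "a \<in> sigma_sets (space P) G"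
        using a sets_coord_sigma_Un_subset[OF X WV] unfolding G_def by blast
    qed (use b G_indep sets_coord_sigma_subset[OF Y] in auto)
  qed
qed

lemma cond_indep_of_Diff_cond:
  assumes indep: "cond_indep P M (X - Z) (Y - Z) Z"
    and X: "X \<subseteq> V" and Y: "Y \<subseteq> V" and Z: "Z \<subseteq> V"
  shows "cond_indep P M X Y Z"
proof -
  have "cond_indep P M ((X - Z) \<union> (X \<inter> Z)) (Y - Z) Z"
    using X Y Z by (intro cond_indep_Un_cond_left[OF indep]) auto
  then have "cond_indep P M (Y - Z) X Z"
    by (simp add: Un_Diff_Int cond_indep_sym)
  then have "cond_indep P M ((Y - Z) \<union> (Y \<inter> Z)) X Z"
    using X Y Z by (intro cond_indep_Un_cond_left) auto
  then show ?thesis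
    by (simp add: Un_Diff_Int cond_indep_sym)
qed

end

section \<open>Separation in undirected graphs\<close>

definition avoiding_edges :: "'v set \<Rightarrow> ('v \<Rightarrow> 'v \<Rightarrow> bool) \<Rightarrow> 'v set \<Rightarrow> ('v \<times> 'v) set" where
  "avoiding_edges A U T = {(u, v). u \<in> A - T \<and> v \<in> A - T \<and> U u v}"

lemma avoiding_edges_antimono: "T \<subseteq> T' \<Longrightarrow> avoiding_edges A U T' \<subseteq> avoiding_edges A U T"
  unfolding avoiding_edges_def by auto

lemma rtrancl_avoiding_edges_sym:
  assumes "\<And>u v. U u v \<Longrightarrow> U v u" and "(u, v) \<in> (avoiding_edges A U T)\<^sup>*"
  shows "(v, u) \<in> (avoiding_edges A U T)\<^sup>*"
proof -
  have "sym (avoiding_edges A U T)"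
    using assms(1) unfolding avoiding_edges_def sym_def by auto
  then show ?thesis
    using assms(2) sym_rtrancl by (metis symD)
qed

lemma rtrancl_avoiding_edges_target:
  "(u, v) \<in> (avoiding_edges A U T)\<^sup>* \<Longrightarrow> u \<in> A - T \<Longrightarrow> v \<in> A - T"
  by (induction rule: rtrancl_induct) (auto simp: avoiding_edges_def)

lemma separates_iff_rtrancl:
  "separates A U X Y Z \<longleftrightarrow> (\<forall>x\<in>X. \<forall>y\<in>Y. x \<in> A - Z \<longrightarrow> (x, y) \<notin> (avoiding_edges A U Z)\<^sup>*)"
proof
  assume sep: "separates A U X Y Z"
  show "\<forall>x\<in>X. \<forall>y\<in>Y. x \<in> A - Z \<longrightarrow> (x, y) \<notin> (avoiding_edges A U Z)\<^sup>*"
  proof (intro ballI impI notI)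
    fix x y assume x: "x \<in> X" "x \<in> A - Z" and y: "y \<in> Y"
      and "(x, y) \<in> (avoiding_edges A U Z)\<^sup>*"
    then obtain n where "(x, y) \<in> (avoiding_edges A U Z) ^^ n"
      using rtrancl_imp_relpow by blast
    then obtain f where f: "f 0 = x" "f n = y" "\<And>i. i < n \<Longrightarrow> (f i, f (Suc i)) \<in> avoiding_edges A U Z"
      unfolding relpow_fun_conv by blast
    have f_avoids: "f i \<in> A - Z" if "i \<le> n" for i
      using that f(3)[of "i - 1"] x f(1) by (cases i) (auto simp: avoiding_edges_def)
    define p where "p = map f [0..<Suc n]"
    have "p \<noteq> []" "set p \<subseteq> A" "hd p \<in> X" "last p \<in> Y"
      using f_avoids f x y by (auto simp: p_def hd_map last_map simp del: upt_Suc)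
    moreover have "U (p ! i) (p ! Suc i)" if "Suc i < length p" for i
      using that f(3)[of i] by (simp add: p_def avoiding_edges_def del: upt_Suc)
    ultimately have "set p \<inter> Z \<noteq> {}"
      using sep unfolding separates_def by blast
    moreover have "set p \<inter> Z = {}"
      using f_avoids by (auto simp: p_def)
    ultimately show False by simp
  qed
next
  assume reach: "\<forall>x\<in>X. \<forall>y\<in>Y. x \<in> A - Z \<longrightarrow> (x, y) \<notin> (avoiding_edges A U Z)\<^sup>*"
  show "separates A U X Y Z"
    unfolding separates_def
  proof (intro allI impI notI)
    fix p assume p: "p \<noteq> [] \<and> set p \<subseteq> A \<and> hd p \<in> X \<and> last p \<in> Y
      \<and> (\<forall>i. Suc i < length p \<longrightarrow> U (p ! i) (p ! Suc i))" and "set p \<inter> Z = {}"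
    then have p_avoids: "p ! i \<in> A - Z" if "i < length p" for i
      using that nth_mem by blast
    have "(p ! 0, p ! (length p - 1)) \<in> (avoiding_edges A U Z) ^^ (length p - 1)"
      unfolding relpow_fun_conv
      by (intro exI[of _ "\<lambda>i. p ! i"]) (use p p_avoids in \<open>auto simp: avoiding_edges_def\<close>)
    then have "(hd p, last p) \<in> (avoiding_edges A U Z)\<^sup>*"
      using p by (simp add: hd_conv_nth last_conv_nth relpow_imp_rtrancl)
    moreover have "hd p \<in> A - Z"
      using p p_avoids[of 0] by (simp add: hd_conv_nth)
    ultimately show False
      using reach p by blast
  qed
qed

lemma separates_mono:
  "separates A U X Y Z \<Longrightarrow> X' \<subseteq> X \<Longrightarrow> Y' \<subseteq> Y \<Longrightarrow> Z \<subseteq> Z' \<Longrightarrow> separates A U X' Y' Z'"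
  unfolding separates_def by blast

lemma separates_Int_subset: "separates A U X Y Z \<Longrightarrow> X \<subseteq> A \<Longrightarrow> X \<inter> Y \<subseteq> Z"
  unfolding separates_iff_rtrancl by blast

lemma separates_sym:
  assumes U_sym: "\<And>u v. U u v \<Longrightarrow> U v u" and sep: "separates A U X Y Z"
  shows "separates A U Y X Z"
  unfolding separates_iff_rtrancl
proof (intro ballI impI notI)
  fix y x assume "y \<in> Y" "x \<in> X" "y \<in> A - Z" and yx: "(y, x) \<in> (avoiding_edges A U Z)\<^sup>*"
  moreover have "(x, y) \<in> (avoiding_edges A U Z)\<^sup>*"
    using U_sym yx by (rule rtrancl_avoiding_edges_sym)
  moreover have "x \<in> A - Z"
    using rtrancl_avoiding_edges_target[OF yx \<open>y \<in> A - Z\<close>] .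
  ultimately show False
    using sep unfolding separates_iff_rtrancl by blast
qed

lemma separates_via_vertex:
  assumes U_sym: "\<And>u v. U u v \<Longrightarrow> U v u" and sep: "separates A U X Y S"
    and \<alpha>: "\<alpha> \<notin> X" "\<alpha> \<notin> Y" "\<alpha> \<notin> S"
  shows "separates A U X {\<alpha>} (Y \<union> S) \<or> separates A U Y {\<alpha>} (X \<union> S)"
proof (rule ccontr)
  assume "\<not> ?thesis"
  then obtain x y where x: "x \<in> X" "x \<in> A - (Y \<union> S)" "(x, \<alpha>) \<in> (avoiding_edges A U (Y \<union> S))\<^sup>*"
    and y: "y \<in> Y" "y \<in> A - (X \<union> S)" "(y, \<alpha>) \<in> (avoiding_edges A U (X \<union> S))\<^sup>*"
    unfolding separates_iff_rtrancl by blast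
  have x\<alpha>: "(x, \<alpha>) \<in> (avoiding_edges A U S)\<^sup>*" and y\<alpha>: "(y, \<alpha>) \<in> (avoiding_edges A U S)\<^sup>*"
    using x(3) y(3) rtrancl_mono[OF avoiding_edges_antimono, of S] by blast+
  have "(\<alpha>, y) \<in> (avoiding_edges A U S)\<^sup>*"
    using U_sym y\<alpha> by (rule rtrancl_avoiding_edges_sym)
  with x\<alpha> have "(x, y) \<in> (avoiding_edges A U S)\<^sup>*"
    by (rule rtrancl_trans)
  then show False
    using sep x y unfolding separates_iff_rtrancl by blast
qed

section \<open>From the pairwise to the global Markov property\<close>

locale undirected_pairwise_markov = coord_prob_space P V M
  for P :: "('v \<Rightarrow> 'b) measure" and V M +
  fixes A :: "'v set" and U :: "'v \<Rightarrow> 'v \<Rightarrow> bool"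
  assumes intersection: "intersection_property V P M"
    and A_subset: "A \<subseteq> V" and finite_A: "finite A"
    and U_sym: "\<And>u v. U u v \<Longrightarrow> U v u"
    and pairwise: "\<And>v w. v \<in> A \<Longrightarrow> w \<in> A \<Longrightarrow> w \<noteq> v \<Longrightarrow> \<not> U v w
      \<Longrightarrow> cond_indep P M {v} {w} (A - {v, w})"
begin

lemma cond_indep_Un_right:
  assumes "X \<subseteq> A" "Y \<subseteq> A" "Z \<subseteq> A" "W \<subseteq> A"
    and "X \<inter> Y = {}" "X \<inter> Z = {}" "X \<inter> W = {}" "Y \<inter> Z = {}" "Y \<inter> W = {}" "Z \<inter> W = {}"
    and "cond_indep P M X Y (W \<union> Z)" "cond_indep P M X W (Y \<union> Z)"
  shows "cond_indep P M X (Y \<union> W) Z"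
proof -
  have "X \<subseteq> V" "Y \<subseteq> V" "Z \<subseteq> V" "W \<subseteq> V"
    using assms(1-4) A_subset by auto
  then show ?thesis
    using intersection assms(5-) unfolding intersection_property_def by blast
qed

lemma cond_indep_split_right:
  assumes larger: "\<And>X' Y' S'. S \<subset> S' \<Longrightarrow> S' \<subseteq> A \<Longrightarrow> X' \<subseteq> A \<Longrightarrow> Y' \<subseteq> A
      \<Longrightarrow> X' \<inter> S' = {} \<Longrightarrow> Y' \<inter> S' = {} \<Longrightarrow> separates A U X' Y' S' \<Longrightarrow> cond_indep P M X' Y' S'"
    and X: "X \<subseteq> A" "X \<inter> S = {}" and Y: "Y \<subseteq> A" "Y \<inter> S = {}" and S: "S \<subseteq> A"
    and sep: "separates A U X Y S" and y: "y \<in> Y" "Y - {y} \<noteq> {}"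
  shows "cond_indep P M X Y S"
proof -
  have XY: "X \<inter> Y = {}"
    using separates_Int_subset[OF sep X(1)] X(2) by blast
  have "cond_indep P M X {y} ((Y - {y}) \<union> S)"
  proof (rule larger)
    show "separates A U X {y} ((Y - {y}) \<union> S)"
      by (rule separates_mono[OF sep]) (use y in auto)
  qed (use X Y y S XY in auto)
  moreover have "cond_indep P M X (Y - {y}) ({y} \<union> S)"
  proof (rule larger)
    show "separates A U X (Y - {y}) ({y} \<union> S)"
      by (rule separates_mono[OF sep]) auto
  qed (use X Y y S XY in auto)
  ultimately have "cond_indep P M X ({y} \<union> (Y - {y})) S"
    using X Y y XY S by (intro cond_indep_Un_right) auto
  then show ?thesis
    using y by (simp add: insert_absorb)
qed

lemma cond_indep_of_vertex_outside:
  assumes larger: "\<And>X' Y' S'. S \<subset> S' \<Longrightarrow> S' \<subseteq> A \<Longrightarrow> X' \<subseteq> A \<Longrightarrow> Y' \<subseteq> A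
      \<Longrightarrow> X' \<inter> S' = {} \<Longrightarrow> Y' \<inter> S' = {} \<Longrightarrow> separates A U X' Y' S' \<Longrightarrow> cond_indep P M X' Y' S'"
    and X: "X \<subseteq> A" "X \<inter> S = {}" "X \<noteq> {}" and Y: "Y \<subseteq> A" "Y \<inter> S = {}" "Y \<noteq> {}"
    and S: "S \<subseteq> A" and sep: "separates A U X Y S"
    and \<alpha>: "\<alpha> \<in> A" "\<alpha> \<notin> X" "\<alpha> \<notin> Y" "\<alpha> \<notin> S"
  shows "cond_indep P M X Y S"
proof -
  have one_side: "cond_indep P M X' Y' S"
    if X': "X' \<subseteq> A" "X' \<inter> S = {}" "\<alpha> \<notin> X'" and Y': "Y' \<subseteq> A" "Y' \<inter> S = {}" "Y' \<noteq> {}" "\<alpha> \<notin> Y'"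
      and sep': "separates A U X' Y' S" and sep\<alpha>: "separates A U X' {\<alpha>} (Y' \<union> S)" for X' Y'
  proof -
    have XY: "X' \<inter> Y' = {}"
      using separates_Int_subset[OF sep' X'(1)] X'(2) by blast
    have "cond_indep P M X' Y' ({\<alpha>} \<union> S)"
    proof (rule larger)
      show "separates A U X' Y' ({\<alpha>} \<union> S)"
        by (rule separates_mono[OF sep']) auto
    qed (use X' Y' \<alpha> S in auto)
    moreover have "cond_indep P M X' {\<alpha>} (Y' \<union> S)"
      by (rule larger) (use X' Y' \<alpha> S XY sep\<alpha> in auto)
    ultimately have "cond_indep P M X' (Y' \<union> {\<alpha>}) S"
      using X' Y' \<alpha> XY S by (intro cond_indep_Un_right) auto
    then show ?thesis
      by (rule cond_indep_mono_right) (use Y' \<alpha> A_subset in auto)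
  qed
  from separates_via_vertex[OF U_sym sep \<alpha>(2-4)] show ?thesis
  proof
    assume "separates A U X {\<alpha>} (Y \<union> S)"
    then show ?thesis
      by (intro one_side) (use X Y \<alpha> sep in auto)
  next
    assume "separates A U Y {\<alpha>} (X \<union> S)"
    then have "cond_indep P M Y X S"
      by (intro one_side) (use X Y \<alpha> separates_sym[OF U_sym sep] in auto)
    then show ?thesis
      by (rule cond_indep_sym)
  qed
qed

lemma cond_indep_of_separates_singletons:
  assumes sep: "separates A U {x} {y} S" and xy: "x \<in> A" "y \<in> A" "x \<notin> S" and S: "S = A - {x, y}"
  shows "cond_indep P M {x} {y} S"
proof -
  have "y \<noteq> x"
    using separates_Int_subset[OF sep] xy by auto
  moreover have "\<not> U x y"
  proof
    assume "U x y"
    then have "(x, y) \<in> (avoiding_edges A U S)\<^sup>*"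
      using xy S by (auto simp: avoiding_edges_def)
    then show False
      using sep xy unfolding separates_iff_rtrancl by blast
  qed
  ultimately show ?thesis
    using pairwise[OF xy(1,2)] S by simp
qed

lemma cond_indep_of_separates:
  assumes "X \<subseteq> A" "Y \<subseteq> A" "S \<subseteq> A" "X \<inter> S = {}" "Y \<inter> S = {}" "separates A U X Y S"
  shows "cond_indep P M X Y S"
  using assms
proof (induction "card (A - S)" arbitrary: X Y S rule: less_induct)
  case less
  have X: "X \<subseteq> A" "X \<inter> S = {}" and Y: "Y \<subseteq> A" "Y \<inter> S = {}" and S: "S \<subseteq> A"
    and sep: "separates A U X Y S"
    using less.prems by auto
  have larger: "cond_indep P M X' Y' S'"
    if "S \<subset> S'" "S' \<subseteq> A" "X' \<subseteq> A" "Y' \<subseteq> A" "X' \<inter> S' = {}" "Y' \<inter> S' = {}"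
      "separates A U X' Y' S'" for X' Y' S'
  proof (rule less.hyps)
    show "card (A - S') < card (A - S)"
      using that(1,2) finite_A by (intro psubset_card_mono) auto
  qed (use that in auto)
  show ?case
  proof (cases "X = {} \<or> Y = {}")
    case True
    have "cond_indep P M {} Z S" if "Z \<subseteq> A" for Z
      using S that A_subset by (intro cond_indep_of_subset_cond) auto
    then show ?thesis
      using True X Y by (auto intro: cond_indep_sym)
  next
    case nonempty: False
    then obtain x y where x: "x \<in> X" and y: "y \<in> Y"
      by blast
    consider (outside) \<alpha> where "\<alpha> \<in> A" "\<alpha> \<notin> X" "\<alpha> \<notin> Y" "\<alpha> \<notin> S"
      | (split_Y) "Y - {y} \<noteq> {}" | (split_X) "X - {x} \<noteq> {}"
      | (singletons) "X = {x}" "Y = {y}" "S = A - {x, y}"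
    proof (cases "A \<subseteq> X \<union> Y \<union> S")
      case True
      moreover have "x \<notin> S" "y \<notin> S"
        using x y X Y by auto
      ultimately show thesis
        using that(2-4) x y S by auto
    qed (use that(1) in blast)
    then show ?thesis
    proof cases
      case (outside \<alpha>)
      with X Y S sep nonempty show ?thesis
        by (intro cond_indep_of_vertex_outside[OF larger]) auto
    next
      case split_Y
      with X Y S sep y show ?thesis
        by (intro cond_indep_split_right[OF larger]) auto
    next
      case split_X
      with X Y S separates_sym[OF U_sym sep] x have "cond_indep P M Y X S"
        by (intro cond_indep_split_right[OF larger]) auto
      then show ?thesis
        by (rule cond_indep_sym)
    next
      case singletons
      then have "cond_indep P M {x} {y} S"
        using X Y sep by (intro cond_indep_of_separates_singletons) auto
      with singletons show ?thesis
        by simp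
    qed
  qed
qed

end

lemma moral_adj_sym:
  assumes "moral_adj V E H v w"
  shows "moral_adj V E H w v"
proof -
  obtain vs where vs: "v \<noteq> w" "vs \<noteq> []" "set vs \<subseteq> V" "v \<in> {hd vs} \<union> parents E (hd vs)"
    "w \<in> {last vs} \<union> parents E (last vs)" "\<forall>i. Suc i < length vs \<longrightarrow> bidir H (vs ! i) (vs ! Suc i)"
    using assms unfolding moral_adj_def by blast
  have "bidir H (rev vs ! i) (rev vs ! Suc i)" if i: "Suc i < length (rev vs)" for i
  proof -
    define j where "j = length vs - Suc (Suc i)"
    have j: "Suc j < length vs" "length vs - Suc i = Suc j" "length vs - Suc (Suc i) = j"
      using i unfolding j_def by auto
    have "bidir H (vs ! j) (vs ! Suc j)"
      using vs(6) j by blast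
    then have "bidir H (vs ! Suc j) (vs ! j)"
      unfolding bidir_def by (auto simp: insert_commute)
    then show ?thesis
      using i j by (simp add: rev_nth)
  qed
  then show ?thesis
    unfolding moral_adj_def using vs by (intro conjI exI[of _ "rev vs"]) (auto simp: hd_rev last_rev)
qed

theorem mainTheorem10:
  fixes V :: "'v set" and E :: "('v \<times> 'v) set" and H :: "'v set set"
    and M :: "'v \<Rightarrow> 'b measure" and P :: "('v \<Rightarrow> 'b) measure"
  assumes "hedg V E H"
    and "\<forall>v\<in>V. standard_borel (M v)"
    and "prob_space P"
    and "sets P = sets (PiM V M)"
    and "intersection_property V P M"
    and "ancestral_pairwise_markov V E H P M"
  shows "ancestral_global_markov V E H P M"
  unfolding ancestral_global_markov_def
proof (intro allI impI, elim conjE)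
  fix A X Y Z
  assume anc: "ancestral V E A" and X: "X \<subseteq> A" and Y: "Y \<subseteq> A" and Z: "Z \<subseteq> A"
    and sep: "separates A (moral_adj_induced V E H A) X Y Z"
  have A: "A \<subseteq> V" "finite A"
    using anc assms(1) finite_subset by (auto simp: ancestral_def hedg_def)
  have U_sym: "moral_adj_induced V E H A v u" if "moral_adj_induced V E H A u v" for u v
    using that unfolding moral_adj_induced_def by (rule moral_adj_sym)
  have pairwise: "cond_indep P M {v} {w} (A - {v, w})"
    if "v \<in> A" "w \<in> A" "w \<noteq> v" "\<not> moral_adj_induced V E H A v w" for v w
    using assms(6) anc that unfolding ancestral_pairwise_markov_def by blast
  interpret undirected_pairwise_markov P V M A "moral_adj_induced V E H A"
    by (rule undirected_pairwise_markov.intro[OF coord_prob_space.intro[OF assms(3)]])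
      (unfold_locales, fact assms(4), fact assms(5), fact A(1), fact A(2), fact U_sym, fact pairwise)
  have "separates A (moral_adj_induced V E H A) (X - Z) (Y - Z) Z"
    by (rule separates_mono[OF sep]) auto
  then have "cond_indep P M (X - Z) (Y - Z) Z"
    by (intro cond_indep_of_separates) (use X Y Z in auto)
  then show "cond_indep P M X Y Z"
    by (rule cond_indep_of_Diff_cond) (use X Y Z A in auto)
qed

end
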